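(* Let $\mathbf A\in\mathbb C^{n\times n}$ with $\operatorname{Ind}\mathbf A=k$ and $\operatorname{rank}\mathbf A^{k+1}=\operatorname{rank}\mathbf A^{k}=r\le n$. Then $\mathbf A^{D}\mathbf A=(p_{ij})$ satisfies, for all $i,j=1,\dots,n$, \[p_{ij}=\frac{\sum_{\beta\in J_{r,n}\{i\}}\left|\left(\mathbf A^{k+1}_{.i}(\mathbf a^{(k+1)}_{.j})\right)^{\beta}_{\beta}\right|}{\sum_{\beta\in J_{r,n}}\left|(\mathbf A^{k+1})^{\beta}_{\beta}\right|},\] where $\mathbf a^{(k+1)}_{.j}$ is the $j$-th column of $\mathbf A^{k+1}$.
   Context: $\operatorname{Ind}\mathbf A$ is the smallest nonnegative $k$ with $\operatorname{rank}\mathbf A^{k+1}=\operatorname{rank}\mathbf A^{k}$; the Drazin inverse $\mathbf A^{D}$ is the unique $\mathbf X$ with $\mathbf A^{k+1}\mathbf X=\mathbf A^{k}$, $\mathbf X\mathbf A\mathbf X=\mathbf X$, $\mathbf A\mathbf X=\mathbf X\mathbf A$. $\mathbf M_{.i}(\mathbf c)$ denotes $\mathbf M$ with its $i$-th column replaced by $\mathbf c$. $J_{r,n}$ is the set of strictly increasing sequences of $r$ elements of $\{1,\dots,n\}$, $J_{r,n}\{i\}=\{\beta\in J_{r,n}:i\in\beta\}$, $\mathbf M^{\beta}_{\beta}$ is the principal submatrix indexed by $\beta$, $|\cdot|$ is the determinant. *)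

theory Defs
  imports "Jordan_Normal_Form.DL_Rank_Submatrix" "Jordan_Normal_Form.Determinant"
begin

definition mrank :: "'a::field mat \<Rightarrow> nat" where
  "mrank A = vec_space.rank (dim_row A) A"

definition matrix_index :: "'a::field mat \<Rightarrow> nat" where
  "matrix_index A = (LEAST k. mrank (A ^\<^sub>m (k+1)) = mrank (A ^\<^sub>m k))"

definition drazin :: "'a::field mat \<Rightarrow> 'a mat" where
  "drazin A = (THE X. X \<in> carrier_mat (dim_row A) (dim_row A) \<and>
      A ^\<^sub>m (matrix_index A + 1) * X = A ^\<^sub>m (matrix_index A) \<and>
      X * A * X = X \<and> A * X = X * A)"

definition mat_col_replace :: "'a mat \<Rightarrow> nat \<Rightarrow> 'a vec \<Rightarrow> 'a mat" where
  "mat_col_replace M i c = mat (dim_row M) (dim_col M) (\<lambda>(a,b). if b = i then c $ a else M $$ (a,b))"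

text \<open>J_{r,n}: strictly increasing r-sequences in {0..<n}, represented as r-element subsets.\<close>
definition Jrn :: "nat \<Rightarrow> nat \<Rightarrow> nat set set" where
  "Jrn r n = {\<beta>. \<beta> \<subseteq> {0..<n} \<and> card \<beta> = r}"

end

theory Submission
  imports Defs "Jordan_Normal_Form.Matrix_Kernel" "Jordan_Normal_Form.Jordan_Normal_Form_Uniqueness"
    "Jordan_Normal_Form.Jordan_Normal_Form_Existence"
begin

text \<open>
  By the Jordan form, A is similar to a block diagonal matrix diag(B, N) with B invertible
  and N nilpotent; the rank condition forces N^k = 0 and B to be r \<times> r. Splitting the
  similarity P, Q into F (first r columns of P) and H (first r rows of Q) gives H F = I,
  A^(k+1) = F C H with C = B^(k+1) invertible, and A^D A = F H.

  For such a factorization, Cauchy--Binet turns the sum of the principal r-minors of F C H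
  into det (C H F) = det C. Replacing column i by column j only changes H, to H' say; the
  minors avoiding i are those of the matrix H0 with zero i-th column, and those containing i
  vanish for H0. Hence the numerator is det C (det (H' F) - det (H0 F)); both are
  determinants of rank-one perturbations of the identity, and their difference is (F H)_ij.
\<close>

section \<open>The Cauchy--Binet formula\<close>

lemma Jrn_D:
  assumes "\<beta> \<in> Jrn r n"
  shows "\<beta> \<subseteq> {0..<n}" "card \<beta> = r" "finite \<beta>"
  using assms unfolding Jrn_def by (auto intro: finite_subset)

lemma Jrn_Collect_less:
  assumes "\<beta> \<in> Jrn r n"
  shows "{j. j < n \<and> j \<in> \<beta>} = \<beta>"
  using Jrn_D[OF assms] by auto

lemma finite_Jrn: "finite (Jrn r n)"
  by (rule finite_subset[of _ "Pow {0..<n}"]) (auto simp: Jrn_def)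

lemma pick_inj:
  assumes "i < card \<beta>" "j < card \<beta>" "pick \<beta> i = pick \<beta> j"
  shows "i = j"
  using pick_mono[of i \<beta> j] pick_mono[of j \<beta> i] assms by (cases i j rule: linorder_cases) auto

lemma card_Collect_less_less_card:
  fixes \<beta> :: "nat set"
  assumes "finite \<beta>" "x \<in> \<beta>"
  shows "card {a\<in>\<beta>. a < x} < card \<beta>"
proof -
  have "{a\<in>\<beta>. a < x} \<subseteq> \<beta> - {x}" by auto
  thus ?thesis using card_mono[OF finite_Diff[OF assms(1)]] card_Diff1_less[OF assms] by (meson le_less_trans)
qed

lemma pick_image: "finite \<beta> \<Longrightarrow> pick \<beta> ` {0..<card \<beta>} = \<beta>"
  using pick_in_set[OF disjI1] card_Collect_less_less_card pick_card_in_set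
  by (auto intro!: image_eqI[of _ "pick \<beta>", OF sym[OF pick_card_in_set]])

lemma submatrix_UNIV_Jrn:
  assumes b: "\<beta> \<in> Jrn r n" and Y: "Y \<in> carrier_mat m n"
  shows "submatrix Y UNIV \<beta> \<in> carrier_mat m r"
    and "i < m \<Longrightarrow> j < r \<Longrightarrow> submatrix Y UNIV \<beta> $$ (i, j) = Y $$ (i, pick \<beta> j)"
proof -
  have rows: "card {i. i < dim_row Y \<and> i \<in> (UNIV::nat set)} = m" using Y by simp
  have cols: "card {j. j < dim_col Y \<and> j \<in> \<beta>} = r" using Y Jrn_Collect_less[OF b] Jrn_D[OF b] by simp
  show "submatrix Y UNIV \<beta> \<in> carrier_mat m r"
    unfolding carrier_mat_def using rows cols by (simp only: dim_submatrix mem_Collect_eq)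
  show "i < m \<Longrightarrow> j < r \<Longrightarrow> submatrix Y UNIV \<beta> $$ (i, j) = Y $$ (i, pick \<beta> j)"
    using submatrix_index[of i Y UNIV j \<beta>] rows cols by (simp add: pick_UNIV)
qed

lemma submatrix_Jrn_UNIV:
  assumes b: "\<beta> \<in> Jrn r n" and X: "X \<in> carrier_mat n m"
  shows "submatrix X \<beta> UNIV \<in> carrier_mat r m"
    and "i < r \<Longrightarrow> j < m \<Longrightarrow> submatrix X \<beta> UNIV $$ (i, j) = X $$ (pick \<beta> i, j)"
proof -
  have rows: "card {i. i < dim_row X \<and> i \<in> \<beta>} = r" using X Jrn_Collect_less[OF b] Jrn_D[OF b] by simp
  have cols: "card {j. j < dim_col X \<and> j \<in> (UNIV::nat set)} = m" using X by simp
  show "submatrix X \<beta> UNIV \<in> carrier_mat r m"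
    unfolding carrier_mat_def using rows cols by (simp only: dim_submatrix mem_Collect_eq)
  show "i < r \<Longrightarrow> j < m \<Longrightarrow> submatrix X \<beta> UNIV $$ (i, j) = X $$ (pick \<beta> i, j)"
    using submatrix_index[of i X \<beta> j UNIV] rows cols by (simp add: pick_UNIV)
qed

definition inj_index_maps :: "nat \<Rightarrow> nat \<Rightarrow> (nat \<Rightarrow> nat) set" where
  "inj_index_maps r n =
     {f. (\<forall>i\<in>{0..<r}. f i \<in> {0..<n}) \<and> (\<forall>i. i \<notin> {0..<r} \<longrightarrow> f i = i) \<and> inj_on f {0..<r}}"

lemma det_mult_sum_inj_index_maps:
  fixes G F :: "'a::comm_ring_1 mat"
  assumes G: "G \<in> carrier_mat r n" and F: "F \<in> carrier_mat n r"
  shows "det (G * F) = (\<Sum>f\<in>inj_index_maps r n.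
      (\<Prod>i\<in>{0..<r}. G $$ (i, f i)) * det (mat\<^sub>r r r (\<lambda>i. row F (f i))))"
proof -
  define FF where "FF = {f. (\<forall>i\<in>{0..<r}. f i \<in> {0..<n}) \<and> (\<forall>i. i \<notin> {0..<r} \<longrightarrow> f i = i)}"
  define h where "h = (\<lambda>f. (\<Prod>i\<in>{0..<r}. G $$ (i, f i)) * det (mat\<^sub>r r r (\<lambda>i. row F (f i))))"
  have fin: "finite FF" unfolding FF_def by (rule finite_bounded_functions, auto)
  have sub: "inj_index_maps r n \<subseteq> FF" unfolding inj_index_maps_def FF_def by blast
  have "det (G * F) = (\<Sum>f\<in>FF. det (mat\<^sub>r r r (\<lambda>i. G $$ (i, f i) \<cdot>\<^sub>v row F (f i))))"
    unfolding mat_mul_finsum_alt[OF G F] FF_def by (rule det_linear_rows_sum, insert G F, auto)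
  also have "\<dots> = sum h FF"
    unfolding h_def by (rule sum.cong[OF refl], rule det_rows_mul, insert F, auto simp: FF_def)
  also have "\<dots> = sum h (inj_index_maps r n) + sum h (FF - inj_index_maps r n)"
    using sum.subset_diff[OF sub fin, of h] by (simp add: add.commute)
  also have "sum h (FF - inj_index_maps r n) = 0"
  proof (rule sum.neutral, rule ballI)
    fix f assume "f \<in> FF - inj_index_maps r n"
    then obtain i j where ij: "f i = f j" "i \<noteq> j" "i < r" "j < r"
      unfolding FF_def inj_index_maps_def inj_on_def by auto
    have "det (mat\<^sub>r r r (\<lambda>i. row F (f i))) = 0"
      by (rule det_identical_rows[OF _ ij(2-4)], insert ij, auto)
    thus "h f = 0" unfolding h_def by simp
  qed
  finally show ?thesis unfolding h_def by simp
qed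

text \<open>Every injective index map factors uniquely as an increasing enumeration of its image
  after a permutation.\<close>

definition pick_perm :: "nat \<Rightarrow> nat set \<Rightarrow> (nat \<Rightarrow> nat) \<Rightarrow> nat \<Rightarrow> nat" where
  "pick_perm r \<beta> \<pi> = (\<lambda>i. if i < r then pick \<beta> (\<pi> i) else i)"

lemma pick_perm_in_inj_index_maps:
  assumes b: "\<beta> \<in> Jrn r n" and p: "\<pi> permutes {0..<r}"
  shows "pick_perm r \<beta> \<pi> \<in> inj_index_maps r n"
proof -
  note bb = Jrn_D[OF b]
  have pi: "i < r \<Longrightarrow> \<pi> i < r" for i using permutes_in_image[OF p] by auto
  have pick: "pick \<beta> (\<pi> i) \<in> {0..<n}" if "i < r" for i
    using pick_in_set[OF disjI1, of "\<pi> i" \<beta>] pi[OF that] bb by auto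
  have "inj_on (pick_perm r \<beta> \<pi>) {0..<r}"
  proof (rule inj_onI)
    fix i j assume ij: "i \<in> {0..<r}" "j \<in> {0..<r}" and e: "pick_perm r \<beta> \<pi> i = pick_perm r \<beta> \<pi> j"
    hence "\<pi> i = \<pi> j" using pick_inj[of "\<pi> i" \<beta> "\<pi> j"] pi bb by (auto simp: pick_perm_def)
    thus "i = j" using permutes_inj[OF p] by (auto dest: injD)
  qed
  thus ?thesis using pick bb unfolding inj_index_maps_def pick_perm_def by auto
qed

lemma pick_perm_eqD:
  assumes b: "\<beta> \<in> Jrn r n" and p: "\<pi> permutes {0..<r}"
    and b': "\<beta>' \<in> Jrn r n" and p': "\<pi>' permutes {0..<r}"
    and e: "pick_perm r \<beta> \<pi> = pick_perm r \<beta>' \<pi>'"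
  shows "\<beta> = \<beta>' \<and> \<pi> = \<pi>'"
proof -
  note bb = Jrn_D[OF b] and bb' = Jrn_D[OF b']
  have e2: "pick \<beta> (\<pi> i) = pick \<beta>' (\<pi>' i)" if "i < r" for i
    using fun_cong[OF e, of i] that by (simp add: pick_perm_def)
  have "\<beta> = pick \<beta> ` \<pi> ` {0..<r}" using pick_image[OF bb(3)] permutes_image[OF p] bb by simp
  also have "\<dots> = pick \<beta>' ` \<pi>' ` {0..<r}" using e2 by (force simp: image_image)
  also have "\<dots> = \<beta>'" using pick_image[OF bb'(3)] permutes_image[OF p'] bb' by simp
  finally have beq: "\<beta> = \<beta>'" .
  have "\<pi> i = \<pi>' i" for i
  proof (cases "i < r")
    case True
    have "\<pi> i < r" "\<pi>' i < r" using True permutes_in_image[OF p] permutes_in_image[OF p'] by auto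
    then show ?thesis using pick_inj[of "\<pi> i" \<beta> "\<pi>' i"] e2[OF True] beq bb by auto
  next
    case False
    then show ?thesis using permutes_not_in[OF p] permutes_not_in[OF p'] by auto
  qed
  thus ?thesis using beq by auto
qed

lemma inj_index_maps_pick_perm:
  assumes f: "f \<in> inj_index_maps r n"
  obtains \<beta> \<pi> where "\<beta> \<in> Jrn r n" "\<pi> permutes {0..<r}" "f = pick_perm r \<beta> \<pi>"
proof -
  define \<beta> where "\<beta> = f ` {0..<r}"
  have fin: "finite \<beta>" unfolding \<beta>_def by auto
  have card: "card \<beta> = r" unfolding \<beta>_def using f by (auto simp: card_image inj_index_maps_def)
  have b: "\<beta> \<in> Jrn r n" using f card unfolding \<beta>_def Jrn_def inj_index_maps_def by auto
  define \<pi> where "\<pi> = (\<lambda>i. if i < r then card {a\<in>\<beta>. a < f i} else i)"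
  have fb: "i < r \<Longrightarrow> f i \<in> \<beta>" for i unfolding \<beta>_def by auto
  have pick: "i < r \<Longrightarrow> pick \<beta> (\<pi> i) = f i" for i
    unfolding \<pi>_def using pick_card_in_set[OF fb] by auto
  have "\<pi> permutes {0..<r}"
  proof (rule inj_on_nat_permutes)
    show "inj_on \<pi> {0..<r}"
    proof (rule inj_onI)
      fix i j assume ij: "i \<in> {0..<r}" "j \<in> {0..<r}" "\<pi> i = \<pi> j"
      hence "f i = f j" using pick[of i] pick[of j] by auto
      thus "i = j" using f ij by (auto simp: inj_index_maps_def dest: inj_onD)
    qed
    show "\<pi> \<in> {0..<r} \<rightarrow> {0..<r}" unfolding \<pi>_def using card_Collect_less_less_card[OF fin fb] card by auto
  qed (auto simp: \<pi>_def)
  moreover have "f = pick_perm r \<beta> \<pi>"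
    using pick f by (auto simp: pick_perm_def inj_index_maps_def)
  ultimately show ?thesis using b that by blast
qed

lemma sum_inj_index_maps_reindex:
  "sum h (inj_index_maps r n) = (\<Sum>\<beta>\<in>Jrn r n. \<Sum>\<pi>\<in>{\<pi>. \<pi> permutes {0..<r}}. h (pick_perm r \<beta> \<pi>))"
proof -
  define S where "S = (SIGMA \<beta>:Jrn r n. {\<pi>. \<pi> permutes {0..<r}})"
  define \<Phi> where "\<Phi> = (\<lambda>(\<beta>,\<pi>). pick_perm r \<beta> \<pi>)"
  have inj: "inj_on \<Phi> S"
    by (rule inj_onI) (auto simp: S_def \<Phi>_def dest: pick_perm_eqD)
  have img: "\<Phi> ` S = inj_index_maps r n"
  proof
    show "\<Phi> ` S \<subseteq> inj_index_maps r n"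
      by (auto simp: S_def \<Phi>_def intro: pick_perm_in_inj_index_maps)
    show "inj_index_maps r n \<subseteq> \<Phi> ` S"
    proof
      fix f assume "f \<in> inj_index_maps r n"
      then obtain \<beta> \<pi> where "\<beta> \<in> Jrn r n" "\<pi> permutes {0..<r}" "f = pick_perm r \<beta> \<pi>"
        by (rule inj_index_maps_pick_perm)
      thus "f \<in> \<Phi> ` S" unfolding S_def \<Phi>_def by force
    qed
  qed
  have fin_perms: "\<forall>\<beta>\<in>Jrn r n. finite {\<pi>. \<pi> permutes {0..<r}}"
    using finite_permutations[of "{0..<r}"] by simp
  have "sum h (inj_index_maps r n) = sum (h \<circ> \<Phi>) S"
    by (subst img[symmetric], rule sum.reindex[OF inj])
  also have "\<dots> = (\<Sum>\<beta>\<in>Jrn r n. \<Sum>\<pi>\<in>{\<pi>. \<pi> permutes {0..<r}}. h (pick_perm r \<beta> \<pi>))"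
    unfolding S_def sum.Sigma[OF finite_Jrn fin_perms] by (simp add: \<Phi>_def split_beta)
  finally show ?thesis .
qed

lemma sum_permutes_pick_perm_eq_det_mult:
  fixes G F :: "'a::comm_ring_1 mat"
  assumes G: "G \<in> carrier_mat r n" and F: "F \<in> carrier_mat n r" and b: "\<beta> \<in> Jrn r n"
  shows "(\<Sum>\<pi>\<in>{\<pi>. \<pi> permutes {0..<r}}.
      (\<Prod>i\<in>{0..<r}. G $$ (i, pick_perm r \<beta> \<pi> i)) * det (mat\<^sub>r r r (\<lambda>i. row F (pick_perm r \<beta> \<pi> i))))
    = det (submatrix G UNIV \<beta>) * det (submatrix F \<beta> UNIV)"
proof -
  let ?Gb = "submatrix G UNIV \<beta>" and ?Fb = "submatrix F \<beta> UNIV"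
  note Gb = submatrix_UNIV_Jrn[OF b G] and Fb = submatrix_Jrn_UNIV[OF b F]
  have "(\<Prod>i\<in>{0..<r}. G $$ (i, pick_perm r \<beta> \<pi> i)) * det (mat\<^sub>r r r (\<lambda>i. row F (pick_perm r \<beta> \<pi> i)))
      = signof \<pi> * (\<Prod>i\<in>{0..<r}. ?Gb $$ (i, \<pi> i)) * det ?Fb" if p: "\<pi> permutes {0..<r}" for \<pi>
  proof -
    have pi: "i < r \<Longrightarrow> \<pi> i < r" for i using permutes_in_image[OF p] by auto
    have pick: "i < r \<Longrightarrow> pick \<beta> (\<pi> i) < n" for i
      using pick_in_set[OF disjI1, of "\<pi> i" \<beta>] pi Jrn_D[OF b] by auto
    have "(\<Prod>i\<in>{0..<r}. G $$ (i, pick_perm r \<beta> \<pi> i)) = (\<Prod>i\<in>{0..<r}. ?Gb $$ (i, \<pi> i))"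
      by (rule prod.cong, insert Gb(2) G pi, auto simp: pick_perm_def)
    moreover have "mat\<^sub>r r r (\<lambda>i. row F (pick_perm r \<beta> \<pi> i)) = mat r r (\<lambda>(i,j). ?Fb $$ (\<pi> i, j))"
      by (rule eq_matI, insert F Fb(2) pi pick, auto simp: pick_perm_def)
    moreover have "det (mat r r (\<lambda>(i,j). ?Fb $$ (\<pi> i, j))) = signof \<pi> * det ?Fb"
      by (rule det_permute_rows[OF Fb(1) p])
    ultimately show ?thesis by (simp add: ac_simps)
  qed
  hence "(\<Sum>\<pi>\<in>{\<pi>. \<pi> permutes {0..<r}}.
      (\<Prod>i\<in>{0..<r}. G $$ (i, pick_perm r \<beta> \<pi> i)) * det (mat\<^sub>r r r (\<lambda>i. row F (pick_perm r \<beta> \<pi> i))))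
    = (\<Sum>\<pi>\<in>{\<pi>. \<pi> permutes {0..<r}}. signof \<pi> * (\<Prod>i\<in>{0..<r}. ?Gb $$ (i, \<pi> i)) * det ?Fb)"
    by (intro sum.cong) auto
  also have "\<dots> = det ?Gb * det ?Fb"
    unfolding det_def'[OF Gb(1)] by (simp add: sum_distrib_right)
  finally show ?thesis .
qed

theorem cauchy_binet:
  fixes G F :: "'a::comm_ring_1 mat"
  assumes G: "G \<in> carrier_mat r n" and F: "F \<in> carrier_mat n r"
  shows "det (G * F) = (\<Sum>\<beta>\<in>Jrn r n. det (submatrix G UNIV \<beta>) * det (submatrix F \<beta> UNIV))"
  unfolding det_mult_sum_inj_index_maps[OF G F] sum_inj_index_maps_reindex
  using sum_permutes_pick_perm_eq_det_mult[OF G F] by (intro sum.cong) auto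

section \<open>Principal minors of a factorization F C H with H F = I\<close>

lemma det_one_plus_mult_commute:
  fixes U V :: "'a::idom mat"
  assumes U: "U \<in> carrier_mat r m" and V: "V \<in> carrier_mat m r"
  shows "det (1\<^sub>m r + U * V) = det (1\<^sub>m m + V * U)"
proof -
  \<comment> \<open>Sylvester's identity: L T = T' L with L unitriangular, T and T' block triangular.\<close>
  define L where "L = four_block_mat (1\<^sub>m m) (0\<^sub>m m r) U (1\<^sub>m r)"
  define T where "T = four_block_mat (1\<^sub>m m) (- V) (0\<^sub>m r m) (1\<^sub>m r + U * V)"
  define T' where "T' = four_block_mat (1\<^sub>m m + V * U) (- V) (0\<^sub>m r m) (1\<^sub>m r)"
  have L: "L \<in> carrier_mat (m+r) (m+r)" unfolding L_def by (rule four_block_carrier_mat) simp_all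
  have T: "T \<in> carrier_mat (m+r) (m+r)" unfolding T_def using U V by (intro four_block_carrier_mat) simp_all
  have T': "T' \<in> carrier_mat (m+r) (m+r)" unfolding T'_def using U V by (intro four_block_carrier_mat) simp_all
  have "U * - V + 1\<^sub>m r * (1\<^sub>m r + U * V) = - (U * V) + (1\<^sub>m r + U * V)" using U V by simp
  also have "\<dots> = 1\<^sub>m r" using U V by (intro eq_matI) auto
  finally have UV: "U * - V + 1\<^sub>m r * (1\<^sub>m r + U * V) = 1\<^sub>m r" .
  have "(1\<^sub>m m + V * U) * 1\<^sub>m m + - V * U = (1\<^sub>m m + V * U) + - (V * U)" using U V by simp
  also have "\<dots> = 1\<^sub>m m" using U V by (intro eq_matI) auto
  finally have VU: "(1\<^sub>m m + V * U) * 1\<^sub>m m + - V * U = 1\<^sub>m m" .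
  have "L * T = four_block_mat (1\<^sub>m m * 1\<^sub>m m + 0\<^sub>m m r * 0\<^sub>m r m) (1\<^sub>m m * - V + 0\<^sub>m m r * (1\<^sub>m r + U * V))
      (U * 1\<^sub>m m + 1\<^sub>m r * 0\<^sub>m r m) (U * - V + 1\<^sub>m r * (1\<^sub>m r + U * V))"
    unfolding L_def T_def by (rule mult_four_block_mat, insert U V, auto)
  also have "\<dots> = four_block_mat (1\<^sub>m m) (- V) U (1\<^sub>m r)" unfolding UV using U V by simp
  finally have LT: "L * T = four_block_mat (1\<^sub>m m) (- V) U (1\<^sub>m r)" .
  have "T' * L = four_block_mat ((1\<^sub>m m + V * U) * 1\<^sub>m m + - V * U) ((1\<^sub>m m + V * U) * 0\<^sub>m m r + - V * 1\<^sub>m r)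
      (0\<^sub>m r m * 1\<^sub>m m + 1\<^sub>m r * U) (0\<^sub>m r m * 0\<^sub>m m r + 1\<^sub>m r * 1\<^sub>m r)"
    unfolding L_def T'_def by (rule mult_four_block_mat, insert U V, auto)
  also have "\<dots> = four_block_mat (1\<^sub>m m) (- V) U (1\<^sub>m r)" unfolding VU using U V by simp
  finally have TL: "T' * L = four_block_mat (1\<^sub>m m) (- V) U (1\<^sub>m r)" .
  have "det L = 1" unfolding L_def
    by (subst det_four_block_mat_upper_right_zero[OF _ refl U], auto)
  moreover have "det T = det (1\<^sub>m r + U * V)" unfolding T_def
    by (subst det_four_block_mat_lower_left_zero[OF _ _ refl], insert U V, auto)
  moreover have "det T' = det (1\<^sub>m m + V * U)" unfolding T'_def
    by (subst det_four_block_mat_lower_left_zero[OF _ _ refl], insert U V, auto)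
  moreover have "det L * det T = det T' * det L"
    using det_mult[OF L T] det_mult[OF T' L] LT TL by simp
  ultimately show ?thesis by simp
qed

lemma det_one_plus_outer:
  fixes u v :: "'a::idom vec"
  assumes u: "u \<in> carrier_vec r" and v: "v \<in> carrier_vec r"
  shows "det (1\<^sub>m r + mat r r (\<lambda>(a,b). u $ a * v $ b)) = 1 + v \<bullet> u"
proof -
  define U where "U = mat r 1 (\<lambda>(a,_). u $ a)"
  define V where "V = mat 1 r (\<lambda>(_,b). v $ b)"
  have U: "U \<in> carrier_mat r 1" and V: "V \<in> carrier_mat 1 r" unfolding U_def V_def by simp_all
  have "mat r r (\<lambda>(a,b). u $ a * v $ b) = U * V"
    by (rule eq_matI, auto simp: U_def V_def scalar_prod_def)
  moreover have "1\<^sub>m 1 + V * U = mat 1 1 (\<lambda>_. 1 + v \<bullet> u)"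
    by (rule eq_matI, insert u v, auto simp: U_def V_def scalar_prod_def)
  ultimately show ?thesis using det_one_plus_mult_commute[OF U V] by (simp add: det_single)
qed

lemma submatrix_mult:
  assumes X: "X \<in> carrier_mat a m" and Y: "Y \<in> carrier_mat m b"
  shows "submatrix (X * Y) I J = submatrix X I UNIV * submatrix Y UNIV J"
proof (rule eq_matI)
  fix i j assume "i < dim_row (submatrix X I UNIV * submatrix Y UNIV J)"
    and "j < dim_col (submatrix X I UNIV * submatrix Y UNIV J)"
  hence i: "i < card {i. i < a \<and> i \<in> I}" and j: "j < card {j. j < b \<and> j \<in> J}"
    using X Y by (auto simp: dim_submatrix)
  have pi: "pick I i < a" and pj: "pick J j < b" using pick_le[OF i] pick_le[OF j] .
  have "row (submatrix X I UNIV) i = row X (pick I i)"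
    by (rule eq_vecI) (use i pi X in \<open>auto simp: dim_submatrix submatrix_index pick_UNIV\<close>)
  moreover have "col (submatrix Y UNIV J) j = col Y (pick J j)"
    by (rule eq_vecI) (use j pj Y in \<open>auto simp: dim_submatrix submatrix_index pick_UNIV\<close>)
  ultimately show "submatrix (X * Y) I J $$ (i, j) = (submatrix X I UNIV * submatrix Y UNIV J) $$ (i, j)"
    using i j pi pj X Y by (simp add: dim_submatrix submatrix_index)
qed (use X Y in \<open>auto simp: dim_submatrix\<close>)

lemma submatrix_UNIV_UNIV: "submatrix X UNIV UNIV = X"
  by (rule eq_matI, auto simp: dim_submatrix submatrix_index pick_UNIV)

lemma submatrix_mult_left:
  assumes X: "X \<in> carrier_mat a m" and Y: "Y \<in> carrier_mat m b"
  shows "submatrix (X * Y) UNIV J = X * submatrix Y UNIV J"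
  using submatrix_mult[OF X Y, of UNIV J] by (simp add: submatrix_UNIV_UNIV)

lemma mat_col_replace_mult:
  assumes X: "X \<in> carrier_mat a m" and Y: "Y \<in> carrier_mat m b" and j: "j < b"
  shows "mat_col_replace (X * Y) i (col (X * Y) j) = X * mat_col_replace Y i (col Y j)"
proof (rule eq_matI)
  fix p q assume p: "p < dim_row (X * mat_col_replace Y i (col Y j))" and q: "q < dim_col (X * mat_col_replace Y i (col Y j))"
  have p': "p < a" and q': "q < b" using p q X Y by (auto simp: mat_col_replace_def)
  show "mat_col_replace (X * Y) i (col (X * Y) j) $$ (p, q) = (X * mat_col_replace Y i (col Y j)) $$ (p, q)"
  proof (cases "q = i")
    case True
    have "col (mat_col_replace Y i (col Y j)) q = col Y j"
      by (rule eq_vecI, insert True q' j Y, auto simp: mat_col_replace_def)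
    thus ?thesis using True p' q' j X Y by (simp add: mat_col_replace_def)
  next
    case False
    have "col (mat_col_replace Y i (col Y j)) q = col Y q"
      by (rule eq_vecI, insert False q' j Y, auto simp: mat_col_replace_def)
    thus ?thesis using False p' q' j X Y by (simp add: mat_col_replace_def)
  qed
qed (insert X Y, auto simp: mat_col_replace_def)

lemma col_replace_mult_right_inverse:
  fixes H F :: "'a::field mat"
  assumes F: "F \<in> carrier_mat n r" and H: "H \<in> carrier_mat r n" and HF: "H * F = 1\<^sub>m r"
    and i: "i < n" and x: "x \<in> carrier_vec r"
  shows "mat_col_replace H i x * F = 1\<^sub>m r + mat r r (\<lambda>(a,b). (x - col H i) $ a * (row F i) $ b)"
proof (rule eq_matI)
  fix a b assume "a < dim_row (1\<^sub>m r + mat r r (\<lambda>(a,b). (x - col H i) $ a * (row F i) $ b))"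
    and "b < dim_col (1\<^sub>m r + mat r r (\<lambda>(a,b). (x - col H i) $ a * (row F i) $ b))"
  hence a: "a < r" and b: "b < r" by auto
  have "(mat_col_replace H i x * F) $$ (a,b) = (\<Sum>l<n. (if l = i then x $ a else H $$ (a,l)) * F $$ (l,b))"
    using a b F H by (simp add: mat_col_replace_def scalar_prod_def atLeast0LessThan)
  also have "\<dots> = (\<Sum>l<n. H $$ (a,l) * F $$ (l,b) + (if l = i then (x $ a - H $$ (a,i)) * F $$ (i,b) else 0))"
    by (rule sum.cong, auto simp: algebra_simps)
  also have "\<dots> = (\<Sum>l<n. H $$ (a,l) * F $$ (l,b)) + (x $ a - H $$ (a,i)) * F $$ (i,b)"
    using i by (simp add: sum.distrib)
  also have "(\<Sum>l<n. H $$ (a,l) * F $$ (l,b)) = (H * F) $$ (a,b)"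
    using a b F H by (simp add: scalar_prod_def atLeast0LessThan)
  also have "\<dots> = 1\<^sub>m r $$ (a,b)" using HF by simp
  finally show "(mat_col_replace H i x * F) $$ (a,b)
      = (1\<^sub>m r + mat r r (\<lambda>(a,b). (x - col H i) $ a * (row F i) $ b)) $$ (a,b)"
    using a b i x F H by simp
qed (insert F H, auto simp: mat_col_replace_def)

lemma det_col_replace_mult_right_inverse:
  fixes H F :: "'a::field mat"
  assumes F: "F \<in> carrier_mat n r" and H: "H \<in> carrier_mat r n" and HF: "H * F = 1\<^sub>m r"
    and i: "i < n" and x: "x \<in> carrier_vec r"
  shows "det (mat_col_replace H i x * F) = 1 + row F i \<bullet> (x - col H i)"
  unfolding col_replace_mult_right_inverse[OF assms] by (rule det_one_plus_outer, insert x H F i, auto)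

lemma submatrix_col_replace_not_in:
  assumes H: "H \<in> carrier_mat r n" and b: "\<beta> \<in> Jrn r n" and i: "i \<notin> \<beta>"
  shows "submatrix (mat_col_replace H i x) UNIV \<beta> = submatrix H UNIV \<beta>"
proof -
  have Hx: "mat_col_replace H i x \<in> carrier_mat r n" using H by (simp add: mat_col_replace_def)
  have "pick \<beta> c \<noteq> i" "pick \<beta> c < n" if "c < r" for c
    using pick_in_set[OF disjI1, of c \<beta>] that i Jrn_D[OF b] by auto
  thus ?thesis using submatrix_UNIV_Jrn[OF b H] submatrix_UNIV_Jrn[OF b Hx] H
    by (intro eq_matI) (auto simp: mat_col_replace_def)
qed

lemma det_submatrix_col_replace_zero:
  fixes H :: "'a::field mat"
  assumes H: "H \<in> carrier_mat r n" and b: "\<beta> \<in> Jrn r n" and i: "i \<in> \<beta>"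
  shows "det (submatrix (mat_col_replace H i (0\<^sub>v r)) UNIV \<beta>) = 0"
proof -
  let ?S = "submatrix (mat_col_replace H i (0\<^sub>v r)) UNIV \<beta>"
  have H0: "mat_col_replace H i (0\<^sub>v r) \<in> carrier_mat r n" using H by (simp add: mat_col_replace_def)
  note S = submatrix_UNIV_Jrn[OF b H0]
  note bb = Jrn_D[OF b]
  define q where "q = card {a\<in>\<beta>. a < i}"
  have q: "q < r" and pq: "pick \<beta> q = i"
    using card_Collect_less_less_card[OF bb(3) i] pick_card_in_set[OF i] bb unfolding q_def by auto
  have "?S = replace_col ?S (?S *\<^sub>v 0\<^sub>v r) q"
    by (rule eq_matI, insert S q pq H bb(1) i, auto simp: replace_col_def mat_col_replace_def)
  also have "det \<dots> = (0\<^sub>v r) $ q * det ?S" using cramer_lemma_mat[OF S(1) _ q, of "0\<^sub>v r"] by simp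
  finally show ?thesis using q by simp
qed

lemma sum_principal_minors_mult:
  fixes F Y :: "'a::comm_ring_1 mat"
  assumes F: "F \<in> carrier_mat n r" and Y: "Y \<in> carrier_mat r n"
  shows "(\<Sum>\<beta>\<in>Jrn r n. det (submatrix (F * Y) \<beta> \<beta>)) = det (Y * F)"
  unfolding cauchy_binet[OF Y F] submatrix_mult[OF F Y]
  by (rule sum.cong[OF refl], subst det_mult[OF submatrix_Jrn_UNIV(1)[OF _ F] submatrix_UNIV_Jrn(1)[OF _ Y]],
      auto simp: mult.commute)

lemma sum_minors_containing_col_replace:
  fixes F H :: "'a::field mat"
  assumes F: "F \<in> carrier_mat n r" and H: "H \<in> carrier_mat r n" and HF: "H * F = 1\<^sub>m r"
    and i: "i < n" and x: "x \<in> carrier_vec r"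
  shows "(\<Sum>\<beta>\<in>{\<beta>\<in>Jrn r n. i \<in> \<beta>}.
      det (submatrix F \<beta> UNIV) * det (submatrix (mat_col_replace H i x) UNIV \<beta>)) = row F i \<bullet> x"
proof -
  define g where "g = (\<lambda>y \<beta>. det (submatrix F \<beta> UNIV) * det (submatrix (mat_col_replace H i y) UNIV \<beta>))"
  have total: "(\<Sum>\<beta>\<in>Jrn r n. g y \<beta>) = det (mat_col_replace H i y * F)" for y
  proof -
    have Hy: "mat_col_replace H i y \<in> carrier_mat r n" using H by (simp add: mat_col_replace_def)
    show ?thesis unfolding g_def cauchy_binet[OF Hy F] by (simp add: mult.commute)
  qed
  have split: "(\<Sum>\<beta>\<in>Jrn r n. g y \<beta>)
      = (\<Sum>\<beta>\<in>{\<beta>\<in>Jrn r n. i \<in> \<beta>}. g y \<beta>) + (\<Sum>\<beta>\<in>{\<beta>\<in>Jrn r n. i \<notin> \<beta>}. g y \<beta>)" for y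
    using sum.Int_Diff[OF finite_Jrn, where B = "{\<beta>. i \<in> \<beta>}"] by (simp add: Int_def set_diff_eq)
  have outside: "(\<Sum>\<beta>\<in>{\<beta>\<in>Jrn r n. i \<notin> \<beta>}. g y \<beta>) = (\<Sum>\<beta>\<in>{\<beta>\<in>Jrn r n. i \<notin> \<beta>}. g z \<beta>)" for y z
    unfolding g_def using submatrix_col_replace_not_in[OF H] by (intro sum.cong) auto
  have inside0: "(\<Sum>\<beta>\<in>{\<beta>\<in>Jrn r n. i \<in> \<beta>}. g (0\<^sub>v r) \<beta>) = 0"
    unfolding g_def using det_submatrix_col_replace_zero[OF H] by (intro sum.neutral) auto
  have "(\<Sum>\<beta>\<in>{\<beta>\<in>Jrn r n. i \<in> \<beta>}. g x \<beta>)
      = det (mat_col_replace H i x * F) - det (mat_col_replace H i (0\<^sub>v r) * F)"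
    using split[of x] split[of "0\<^sub>v r"] total[of x] total[of "0\<^sub>v r"] outside[of x "0\<^sub>v r"] inside0
    by (simp add: algebra_simps)
  also have "\<dots> = row F i \<bullet> (x - col H i) - row F i \<bullet> (0\<^sub>v r - col H i)"
    using det_col_replace_mult_right_inverse[OF F H HF i] x by simp
  also have "\<dots> = row F i \<bullet> x"
  proof -
    have rF: "row F i \<in> carrier_vec r" and cH: "col H i \<in> carrier_vec r" using F H i by auto
    show ?thesis using scalar_prod_minus_distrib[OF rF x cH] scalar_prod_minus_distrib[OF rF _ cH] rF by simp
  qed
  finally show ?thesis unfolding g_def .
qed

lemma sum_principal_minors_factorization:
  fixes F H C :: "'a::comm_ring_1 mat"
  assumes F: "F \<in> carrier_mat n r" and H: "H \<in> carrier_mat r n" and C: "C \<in> carrier_mat r r"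
    and HF: "H * F = 1\<^sub>m r"
  shows "(\<Sum>\<beta>\<in>Jrn r n. det (submatrix (F * C * H) \<beta> \<beta>)) = det C"
proof -
  have "F * C * H = F * (C * H)" using F C H by (simp add: assoc_mult_mat)
  moreover have "C * H * F = C" using C H F HF by (simp add: assoc_mult_mat)
  ultimately show ?thesis using sum_principal_minors_mult[OF F, of "C * H"] C H by simp
qed

lemma sum_col_replace_minors_factorization:
  fixes F H C :: "'a::field mat"
  assumes F: "F \<in> carrier_mat n r" and H: "H \<in> carrier_mat r n" and C: "C \<in> carrier_mat r r"
    and HF: "H * F = 1\<^sub>m r" and i: "i < n" and j: "j < n"
  shows "(\<Sum>\<beta>\<in>{\<beta>\<in>Jrn r n. i \<in> \<beta>}.
      det (submatrix (mat_col_replace (F * C * H) i (col (F * C * H) j)) \<beta> \<beta>)) = det C * (F * H) $$ (i,j)"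
proof -
  define H' where "H' = mat_col_replace H i (col H j)"
  have CH: "C * H \<in> carrier_mat r n" and H': "H' \<in> carrier_mat r n" and CH': "C * H' \<in> carrier_mat r n"
    using C H by (auto simp: H'_def mat_col_replace_def)
  have "F * C * H = F * (C * H)" using F C H by (simp add: assoc_mult_mat)
  hence "mat_col_replace (F * C * H) i (col (F * C * H) j) = F * mat_col_replace (C * H) i (col (C * H) j)"
    using mat_col_replace_mult[OF F CH j] by simp
  also have "\<dots> = F * (C * H')" unfolding H'_def mat_col_replace_mult[OF C H j] ..
  finally have replace: "mat_col_replace (F * C * H) i (col (F * C * H) j) = F * (C * H')" .
  have minor: "det (submatrix (F * (C * H')) \<beta> \<beta>)
      = det C * (det (submatrix F \<beta> UNIV) * det (submatrix H' UNIV \<beta>))" if b: "\<beta> \<in> Jrn r n" for \<beta>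
  proof -
    have "submatrix (F * (C * H')) \<beta> \<beta> = submatrix F \<beta> UNIV * (C * submatrix H' UNIV \<beta>)"
      using submatrix_mult[OF F CH', of \<beta> \<beta>] submatrix_mult_left[OF C H'] by simp
    thus ?thesis
      using det_mult[OF submatrix_Jrn_UNIV(1)[OF b F], of "C * submatrix H' UNIV \<beta>"]
        det_mult[OF C submatrix_UNIV_Jrn(1)[OF b H']] C submatrix_UNIV_Jrn(1)[OF b H']
      by (simp add: ac_simps)
  qed
  have "(\<Sum>\<beta>\<in>{\<beta>\<in>Jrn r n. i \<in> \<beta>}.
      det (submatrix (mat_col_replace (F * C * H) i (col (F * C * H) j)) \<beta> \<beta>))
      = det C * (\<Sum>\<beta>\<in>{\<beta>\<in>Jrn r n. i \<in> \<beta>}. det (submatrix F \<beta> UNIV) * det (submatrix H' UNIV \<beta>))"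
    unfolding replace sum_distrib_left using minor by simp
  also have "\<dots> = det C * (F * H) $$ (i,j)"
    unfolding H'_def using sum_minors_containing_col_replace[OF F H HF i, of "col H j"] F H i j by simp
  finally show ?thesis .
qed

section \<open>Core--nilpotent decomposition\<close>

lemma (in vec_space) mult_mat_vec_image_eq_span_cols:
  assumes B: "B \<in> carrier_mat n m"
  shows "(\<lambda>v. B *\<^sub>v v) ` carrier_vec m = span (set (cols B))"
proof -
  have cB: "set (cols B) \<subseteq> carrier_vec n" using B cols_dim by blast
  have dims: "\<forall>w\<in>set (cols B). dim_vec w = n" using cB by auto
  have B_cols: "mat_of_cols n (cols B) = B" using B mat_of_cols_cols[of B] by simp
  have "span (set (cols B)) = span_list (cols B)" using span_list_as_span[OF cB] by simp
  also have "\<dots> = (\<lambda>v. B *\<^sub>v v) ` carrier_vec m"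
  proof
    show "span_list (cols B) \<subseteq> (\<lambda>v. B *\<^sub>v v) ` carrier_vec m"
    proof
      fix x assume "x \<in> span_list (cols B)"
      then obtain c where "x = lincomb_list c (cols B)" unfolding span_list_def by auto
      also have "\<dots> = B *\<^sub>v vec (length (cols B)) c"
        using lincomb_list_as_mat_mult[OF dims, of c] B_cols by simp
      finally show "x \<in> (\<lambda>v. B *\<^sub>v v) ` carrier_vec m" using B by auto
    qed
    show "(\<lambda>v. B *\<^sub>v v) ` carrier_vec m \<subseteq> span_list (cols B)"
    proof
      fix x assume "x \<in> (\<lambda>v. B *\<^sub>v v) ` carrier_vec m"
      then obtain v where v: "v \<in> carrier_vec m" and x: "x = B *\<^sub>v v" by auto
      have "vec (length (cols B)) (\<lambda>i. v $ i) = v" using B v by (intro eq_vecI) auto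
      hence "lincomb_list (\<lambda>i. v $ i) (cols B) = B *\<^sub>v v"
        using lincomb_list_as_mat_mult[OF dims, of "\<lambda>i. v $ i"] B_cols by simp
      thus "x \<in> span_list (cols B)" unfolding span_list_def x by (blast intro: sym)
    qed
  qed
  finally show ?thesis ..
qed

lemma mrank_plus_kernel_dim:
  fixes B :: "'a::field mat"
  assumes B: "B \<in> carrier_mat n n"
  shows "mrank B + kernel_dim B = n"
proof -
  interpret V: vec_space "TYPE('a)" n .
  define T where "T = (\<lambda>v. B *\<^sub>v v)"
  have hom: "T \<in> LinearCombinations.module_hom class_ring V.V V.V"
    unfolding LinearCombinations.module_hom_def T_def using B
    by (auto simp: mult_add_distrib_mat_vec mult_mat_vec module_vec_simps)
  interpret L: linear_map class_ring V.V V.V T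
    by (intro linear_map.intro V.vectorspace_axioms mod_hom.intro mod_hom_axioms.intro hom V.module_axioms)
  have "vectorspace.dim class_ring (V.vs L.imT) + vectorspace.dim class_ring (V.vs L.kerT) = V.dim"
    by (rule L.rank_nullity, simp)
  moreover have "L.imT = V.span (set (cols B))"
    unfolding L.im_def using V.mult_mat_vec_image_eq_span_cols[OF B] by (simp add: T_def)
  moreover have "L.kerT = mat_kernel B"
  proof -
    have "L.kerT = {v. v \<in> carrier V.V \<and> T v = \<zero>\<^bsub>V.V\<^esub>}" by (rule L.ker_def)
    thus ?thesis unfolding mat_kernel_def T_def using B by auto
  qed
  ultimately show ?thesis
    using B V.dim_is_n by (simp add: mrank_def V.rank_def kernel_dim_def)
qed

lemma block_diag_assoc:
  assumes X: "X \<in> carrier_mat a a" and Y: "Y \<in> carrier_mat b b" and Z: "Z \<in> carrier_mat c c"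
  shows "four_block_mat X (0\<^sub>m a (b+c)) (0\<^sub>m (b+c) a) (four_block_mat Y (0\<^sub>m b c) (0\<^sub>m c b) Z)
       = four_block_mat (four_block_mat X (0\<^sub>m a b) (0\<^sub>m b a) Y) (0\<^sub>m (a+b) c) (0\<^sub>m c (a+b)) Z"
  by (rule eq_matI, insert X Y Z, auto)

lemma similar_block_diag_swap:
  fixes X Y :: "'a::comm_ring_1 mat"
  assumes X: "X \<in> carrier_mat a a" and Y: "Y \<in> carrier_mat b b"
  shows "similar_mat (four_block_mat X (0\<^sub>m a b) (0\<^sub>m b a) Y) (four_block_mat Y (0\<^sub>m b a) (0\<^sub>m a b) X)"
proof -
  define P :: "'a mat" where "P = four_block_mat (0\<^sub>m a b) (1\<^sub>m a) (1\<^sub>m b) (0\<^sub>m b a)"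
  define Q :: "'a mat" where "Q = four_block_mat (0\<^sub>m b a) (1\<^sub>m b) (1\<^sub>m a) (0\<^sub>m a b)"
  have P: "P \<in> carrier_mat (a+b) (b+a)" unfolding P_def by (rule four_block_carrier_mat) simp_all
  have Q: "Q \<in> carrier_mat (b+a) (a+b)" unfolding Q_def by (rule four_block_carrier_mat) simp_all
  have PQ: "P * Q = 1\<^sub>m (a+b)" unfolding P_def Q_def
    by (subst mult_four_block_mat, auto)
  have QP: "Q * P = 1\<^sub>m (b+a)" unfolding P_def Q_def
    by (subst mult_four_block_mat, auto)
  have "P * four_block_mat Y (0\<^sub>m b a) (0\<^sub>m a b) X = four_block_mat (0\<^sub>m a b) X Y (0\<^sub>m b a)"
    unfolding P_def using X Y by (subst mult_four_block_mat, auto)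
  hence "P * four_block_mat Y (0\<^sub>m b a) (0\<^sub>m a b) X * Q = four_block_mat (0\<^sub>m a b) X Y (0\<^sub>m b a) * Q" by simp
  also have "\<dots> = four_block_mat X (0\<^sub>m a b) (0\<^sub>m b a) Y"
    unfolding Q_def using X Y by (subst mult_four_block_mat, auto)
  finally have eq: "four_block_mat X (0\<^sub>m a b) (0\<^sub>m b a) Y = P * four_block_mat Y (0\<^sub>m b a) (0\<^sub>m a b) X * Q" by simp
  have "a + b = b + a" by simp
  show ?thesis
    by (rule similar_matI[of _ _ _ _ "a+b"], insert eq PQ QP P Q X Y, auto simp: add.commute)
qed

lemma similar_block_diag_exchange:
  fixes X Y Z :: "'a::comm_ring_1 mat"
  assumes X: "X \<in> carrier_mat a a" and Y: "Y \<in> carrier_mat b b" and Z: "Z \<in> carrier_mat c c"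
  shows "similar_mat (four_block_mat X (0\<^sub>m a (b+c)) (0\<^sub>m (b+c) a) (four_block_mat Y (0\<^sub>m b c) (0\<^sub>m c b) Z))
    (four_block_mat Y (0\<^sub>m b (a+c)) (0\<^sub>m (a+c) b) (four_block_mat X (0\<^sub>m a c) (0\<^sub>m c a) Z))"
proof -
  have "similar_mat (four_block_mat (four_block_mat X (0\<^sub>m a b) (0\<^sub>m b a) Y) (0\<^sub>m (a+b) c) (0\<^sub>m c (a+b)) Z)
      (four_block_mat (four_block_mat Y (0\<^sub>m b a) (0\<^sub>m a b) X) (0\<^sub>m (a+b) c) (0\<^sub>m c (a+b)) Z)"
    by (rule similar_mat_four_block_0_0[OF similar_block_diag_swap[OF X Y] similar_mat_refl[OF Z] _ Z],
        insert X Y, simp)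
  thus ?thesis using block_diag_assoc[OF X Y Z] block_diag_assoc[OF Y X Z] by (simp add: add.commute)
qed

abbreviation invertible_blocks :: "(nat \<times> 'a::zero) list \<Rightarrow> (nat \<times> 'a) list" where
  "invertible_blocks xs \<equiv> filter (\<lambda>(s,e). e \<noteq> 0) xs"
abbreviation nilpotent_blocks :: "(nat \<times> 'a::zero) list \<Rightarrow> (nat \<times> 'a) list" where
  "nilpotent_blocks xs \<equiv> filter (\<lambda>(s,e). e = 0) xs"
abbreviation blocks_size :: "(nat \<times> 'a) list \<Rightarrow> nat" where
  "blocks_size xs \<equiv> sum_list (map fst xs)"

lemma similar_jordan_matrix_Cons:
  fixes rest :: "(nat \<times> 'a::comm_ring_1) list"
  assumes sim: "similar_mat (jordan_matrix rest) M" and M: "M \<in> carrier_mat m m"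
  shows "similar_mat (jordan_matrix ((s,e) # rest)) (four_block_mat (jordan_block s e) (0\<^sub>m s m) (0\<^sub>m m s) M)"
proof -
  from similar_matD[OF sim] obtain m' where "jordan_matrix rest \<in> carrier_mat m' m'" "M \<in> carrier_mat m' m'"
    by blast
  hence m: "blocks_size rest = m" using M jordan_matrix_carrier[of rest] by (metis carrier_matD(1))
  show ?thesis unfolding jordan_matrix_Cons m
    by (rule similar_mat_four_block_0_0[OF similar_mat_refl[OF jordan_block_carrier] sim jordan_block_carrier])
      (use jordan_matrix_carrier[of rest] m in simp)
qed

lemma similar_jordan_matrix_split:
  fixes n_as :: "(nat \<times> 'a::comm_ring_1) list"
  shows "similar_mat (jordan_matrix n_as)
    (four_block_mat (jordan_matrix (invertible_blocks n_as))
      (0\<^sub>m (blocks_size (invertible_blocks n_as)) (blocks_size (nilpotent_blocks n_as)))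
      (0\<^sub>m (blocks_size (nilpotent_blocks n_as)) (blocks_size (invertible_blocks n_as)))
      (jordan_matrix (nilpotent_blocks n_as)))"
proof (induct n_as)
  case Nil
  have "jordan_matrix ([] :: (nat \<times> 'a) list) = four_block_mat (jordan_matrix []) (0\<^sub>m 0 0) (0\<^sub>m 0 0) (jordan_matrix [])"
    by (rule eq_matI, auto)
  thus ?case using similar_mat_refl[OF jordan_matrix_carrier[of "[] :: (nat \<times> 'a) list"]] by simp
next
  case (Cons se rest)
  obtain s e where se: "se = (s,e)" by force
  define J where "J = jordan_block s e"
  define Nr where "Nr = jordan_matrix (invertible_blocks rest)"
  define Zr where "Zr = jordan_matrix (nilpotent_blocks rest)"
  define a where "a = blocks_size (invertible_blocks rest)"
  define c where "c = blocks_size (nilpotent_blocks rest)"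
  have J: "J \<in> carrier_mat s s" and Nr: "Nr \<in> carrier_mat a a" and Zr: "Zr \<in> carrier_mat c c"
    unfolding J_def Nr_def Zr_def a_def c_def by simp_all
  have step: "similar_mat (jordan_matrix (se # rest))
      (four_block_mat J (0\<^sub>m s (a+c)) (0\<^sub>m (a+c) s) (four_block_mat Nr (0\<^sub>m a c) (0\<^sub>m c a) Zr))"
    unfolding se J_def
    by (rule similar_jordan_matrix_Cons[OF Cons[folded Nr_def Zr_def a_def c_def]]) (use Nr Zr in simp)
  show ?case
  proof (cases "e = 0")
    case False
    hence "invertible_blocks (se # rest) = (s,e) # invertible_blocks rest"
      and "nilpotent_blocks (se # rest) = nilpotent_blocks rest" using se by auto
    thus ?thesis using step block_diag_assoc[OF J Nr Zr]
      by (simp add: jordan_matrix_Cons J_def Nr_def Zr_def a_def c_def)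
  next
    case True
    hence "invertible_blocks (se # rest) = invertible_blocks rest"
      and "nilpotent_blocks (se # rest) = (s,e) # nilpotent_blocks rest" using se by auto
    thus ?thesis using similar_mat_trans[OF step similar_block_diag_exchange[OF J Nr Zr]]
      by (simp add: jordan_matrix_Cons J_def Nr_def Zr_def a_def c_def)
  qed
qed

lemma poly_prod_linear_powers_zero_neq:
  fixes l :: "(nat \<times> 'a::field) list"
  assumes "\<forall>(s,e)\<in>set l. e \<noteq> 0"
  shows "poly (\<Prod>(n, a)\<leftarrow>l. [:- a, 1:] ^ n) 0 \<noteq> 0"
  using assms
proof (induct l)
  case (Cons se l)
  obtain s e where se: "se = (s,e)" by force
  have "e \<noteq> 0" using Cons(2) se by auto
  moreover have "poly (\<Prod>(n, a)\<leftarrow>l. [:- a, 1:] ^ n) 0 \<noteq> 0" using Cons by auto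
  ultimately show ?case using se by (simp add: poly_prod_list)
qed simp

lemma det_jordan_matrix_invertible_blocks:
  fixes xs :: "(nat \<times> 'a::field) list"
  shows "det (jordan_matrix (invertible_blocks xs)) \<noteq> 0"
proof
  let ?B = "jordan_matrix (invertible_blocks xs)" and ?m = "blocks_size (invertible_blocks xs)"
  have B: "?B \<in> carrier_mat ?m ?m" by simp
  assume "det ?B = 0"
  then obtain v where v: "v \<in> carrier_vec ?m" "v \<noteq> 0\<^sub>v ?m" "?B *\<^sub>v v = 0\<^sub>v ?m"
    using det_0_iff_vec_prod_zero_field[OF B] by auto
  have "eigenvector ?B v 0" unfolding eigenvector_def using v by auto
  hence "eigenvalue ?B 0" unfolding eigenvalue_def by auto
  hence "poly (char_poly ?B) 0 = 0" using eigenvalue_root_char_poly[OF B] by auto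
  moreover have "poly (char_poly ?B) 0 \<noteq> 0"
    unfolding jordan_matrix_char_poly by (rule poly_prod_linear_powers_zero_neq, auto)
  ultimately show False by simp
qed

lemma jordan_matrix_nilpotent_blocks_pow:
  assumes "\<forall>(s,e)\<in>set xs. e = 0 \<and> s \<le> k"
  shows "jordan_matrix (xs :: (nat \<times> 'a::field) list) ^\<^sub>m k = 0\<^sub>m (blocks_size xs) (blocks_size xs)"
  using assms
proof (induct xs)
  case Nil
  show ?case by (rule eq_matI, auto)
next
  case (Cons se rest)
  obtain s e where se: "se = (s,e)" by force
  have e: "e = 0" and sk: "s \<le> k" using Cons(2) se by auto
  have IH: "jordan_matrix rest ^\<^sub>m k = 0\<^sub>m (blocks_size rest) (blocks_size rest)" using Cons by auto
  have jb: "jordan_block s e ^\<^sub>m k = 0\<^sub>m s s"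
    unfolding e jordan_block_zero_pow by (rule eq_matI, insert sk, auto)
  have "jordan_matrix (se # rest) ^\<^sub>m k = four_block_mat (jordan_block s e ^\<^sub>m k) (0\<^sub>m s (blocks_size rest)) (0\<^sub>m (blocks_size rest) s) (jordan_matrix rest ^\<^sub>m k)"
    unfolding se jordan_matrix_Cons by (rule pow_four_block_mat, auto)
  also have "\<dots> = 0\<^sub>m (blocks_size (se # rest)) (blocks_size (se # rest))" unfolding jb IH using se by simp
  finally show ?case .
qed

lemma kernel_dim_pow_similar_jordan:
  fixes A :: "'a::field mat"
  assumes A: "A \<in> carrier_mat n n" and sim: "similar_mat A (jordan_matrix n_as)"
  shows "kernel_dim (A ^\<^sub>m m) = sum_list (map (min m) (map fst (nilpotent_blocks n_as)))"
proof -
  have "kernel_dim (A ^\<^sub>m m) = dim_gen_eigenspace A 0 m"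
  proof -
    have "char_matrix A 0 = A" unfolding char_matrix_def using A by (intro eq_matI, auto)
    thus ?thesis unfolding dim_gen_eigenspace_def by simp
  qed
  also have "\<dots> = dim_gen_eigenspace (jordan_matrix n_as) 0 m"
    using dim_gen_eigenspace_similar[OF sim] by simp
  also have "\<dots> = (\<Sum> n \<leftarrow> map fst [(n, e)\<leftarrow>n_as . e = 0]. min m n)"
    by (rule dim_gen_eigenspace_jordan_matrix)
  finally show ?thesis by (simp add: comp_def)
qed

lemma sum_list_min_Suc_eq_imp_le:
  assumes "sum_list (map (min (Suc k)) l) = sum_list (map (min k) (l :: nat list))"
  shows "\<forall>s\<in>set l. s \<le> k"
  using assms
proof (induct l)
  case (Cons x l)
  have le: "sum_list (map (min k) l) \<le> sum_list (map (min (Suc k)) l)"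
    by (rule sum_list_mono, auto)
  have le2: "min k x \<le> min (Suc k) x" by simp
  have eq: "min (Suc k) x + sum_list (map (min (Suc k)) l) = min k x + sum_list (map (min k) l)"
    using Cons(2) by simp
  have "min (Suc k) x = min k x" using eq le le2 by linarith
  hence "x \<le> k" by (simp add: min_def split: if_splits)
  moreover have "sum_list (map (min (Suc k)) l) = sum_list (map (min k) l)" using eq le le2 by linarith
  ultimately show ?case using Cons(1) by auto
qed simp

lemma sum_list_min_eq_self: "\<forall>s\<in>set l. s \<le> k \<Longrightarrow> sum_list (map (min k) l) = sum_list (l :: nat list)"
  by (induct l, auto simp: min_def)

lemma core_nilpotent_decomposition:
  fixes A :: "complex mat"
  assumes A: "A \<in> carrier_mat n n" and r1: "mrank (A ^\<^sub>m (k+1)) = r" and r0: "mrank (A ^\<^sub>m k) = r"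
  obtains B N P Q c where "B \<in> carrier_mat r r" "N \<in> carrier_mat c c" "det B \<noteq> 0" "N ^\<^sub>m k = 0\<^sub>m c c"
    "similar_mat_wit A (four_block_mat B (0\<^sub>m r c) (0\<^sub>m c r) N) P Q"
proof -
  obtain as where "char_poly A = (\<Prod>a\<leftarrow>as. [:- a, 1:])" using char_poly_factorized[OF A] by auto
  from jordan_nf_exists[OF A this] obtain n_as where "jordan_nf A n_as" by auto
  hence sim: "similar_mat A (jordan_matrix n_as)" unfolding jordan_nf_def by auto
  define B where "B = jordan_matrix (invertible_blocks n_as)"
  define N where "N = jordan_matrix (nilpotent_blocks n_as)"
  define a where "a = blocks_size (invertible_blocks n_as)"
  define c where "c = blocks_size (nilpotent_blocks n_as)"
  have B: "B \<in> carrier_mat a a" unfolding B_def a_def by simp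
  have N: "N \<in> carrier_mat c c" unfolding N_def c_def by simp
  have "similar_mat A (four_block_mat B (0\<^sub>m a c) (0\<^sub>m c a) N)"
    unfolding B_def N_def a_def c_def by (rule similar_mat_trans[OF sim similar_jordan_matrix_split])
  then obtain P Q where wit: "similar_mat_wit A (four_block_mat B (0\<^sub>m a c) (0\<^sub>m c a) N) P Q"
    unfolding similar_mat_def by blast
  have nac: "n = a + c"
    using similar_mat_witD2(5)[OF A wit] four_block_carrier_mat[OF B N] by (metis carrier_matD(1))
  \<comment> \<open>dim ker A^j sums min j s over the nilpotent Jordan blocks of size s, so equal ranks
    at k and k+1 force every such block to have size at most k.\<close>
  define L where "L = map fst (nilpotent_blocks n_as)"
  have kd: "kernel_dim (A ^\<^sub>m j) = sum_list (map (min j) L)" for j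
    unfolding L_def by (rule kernel_dim_pow_similar_jordan[OF A sim])
  have "sum_list (map (min (Suc k)) L) = sum_list (map (min k) L)"
    using mrank_plus_kernel_dim[OF pow_carrier_mat[OF A, of "k+1"]] mrank_plus_kernel_dim[OF pow_carrier_mat[OF A, of k]]
      r1 r0 kd[of "k+1"] kd[of k] by simp
  hence Lk: "\<forall>s\<in>set L. s \<le> k" by (rule sum_list_min_Suc_eq_imp_le)
  have "N ^\<^sub>m k = 0\<^sub>m c c"
    unfolding N_def c_def by (rule jordan_matrix_nilpotent_blocks_pow) (use Lk in \<open>force simp: L_def\<close>)
  moreover have "r = a"
  proof -
    have "kernel_dim (A ^\<^sub>m k) = c" using kd[of k] sum_list_min_eq_self[OF Lk] by (simp add: L_def c_def)
    thus ?thesis using mrank_plus_kernel_dim[OF pow_carrier_mat[OF A, of k]] r0 nac by simp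
  qed
  moreover have "det B \<noteq> 0" unfolding B_def by (rule det_jordan_matrix_invertible_blocks)
  ultimately show ?thesis using that B N wit by blast
qed

section \<open>The Drazin inverse\<close>

lemma mult_carrier_mat_square[simp]:
  "A \<in> carrier_mat n n \<Longrightarrow> B \<in> carrier_mat n n \<Longrightarrow> A * B \<in> carrier_mat n n"
  by simp

lemma pow_mat_add:
  assumes A: "A \<in> carrier_mat n n"
  shows "A ^\<^sub>m (a + b) = A ^\<^sub>m a * A ^\<^sub>m b"
proof (induct b)
  case 0 thus ?case using A by simp
next
  case (Suc b)
  have "A ^\<^sub>m (a + Suc b) = A ^\<^sub>m (a + b) * A" by simp
  also have "\<dots> = A ^\<^sub>m a * A ^\<^sub>m b * A" using Suc by simp
  also have "\<dots> = A ^\<^sub>m a * (A ^\<^sub>m b * A)" using A by (simp add: assoc_mult_mat[of _ n n _ n _ n])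
  finally show ?case by simp
qed

lemma pow_mat_Suc_left:
  assumes A: "A \<in> carrier_mat n n"
  shows "A ^\<^sub>m (Suc m) = A * A ^\<^sub>m m"
  using pow_mat_add[OF A, of 1 m] A by simp

lemma pow_mat_commute:
  assumes A: "A \<in> carrier_mat n n" and X: "X \<in> carrier_mat n n" and c: "A * X = X * A"
  shows "A ^\<^sub>m m * X = X * A ^\<^sub>m m"
proof (induct m)
  case 0 thus ?case using A X by simp
next
  case (Suc m)
  have "A ^\<^sub>m Suc m * X = A ^\<^sub>m m * (A * X)" using A X by (simp add: assoc_mult_mat[of _ n n _ n _ n])
  also have "\<dots> = (A ^\<^sub>m m * X) * A" unfolding c using A X by (simp add: assoc_mult_mat[of _ n n _ n _ n])
  also have "\<dots> = X * A ^\<^sub>m Suc m" unfolding Suc using A X by (simp add: assoc_mult_mat[of _ n n _ n _ n])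
  finally show ?case .
qed

lemma pow_mat_commute_pow:
  assumes A: "A \<in> carrier_mat n n" and X: "X \<in> carrier_mat n n" and c: "A * X = X * A"
  shows "A ^\<^sub>m a * X ^\<^sub>m b = X ^\<^sub>m b * A ^\<^sub>m a"
proof -
  have c1: "A ^\<^sub>m a * X = X * A ^\<^sub>m a" by (rule pow_mat_commute[OF A X c])
  have "X ^\<^sub>m b * A ^\<^sub>m a = A ^\<^sub>m a * X ^\<^sub>m b" by (rule pow_mat_commute[OF X _ c1[symmetric]], insert A, simp)
  thus ?thesis by simp
qed

lemma drazin_eq_pow_mult_pow:
  assumes A: "A \<in> carrier_mat n n" and X: "X \<in> carrier_mat n n"
    and c: "A * X = X * A" and xax: "X * A * X = X"
  shows "X = A ^\<^sub>m m * X ^\<^sub>m (Suc m)"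
proof (induct m)
  case 0 thus ?case using A X by simp
next
  case (Suc m)
  have x2: "X = A * (X * X)"
  proof -
    have "X = X * A * X" using xax by simp
    also have "\<dots> = A * X * X" using c by simp
    finally show ?thesis using A X by (simp add: assoc_mult_mat[of _ n n _ n _ n])
  qed
  have "X = A ^\<^sub>m m * X ^\<^sub>m m * X" using Suc A X by (simp add: assoc_mult_mat[of _ n n _ n _ n])
  also have "\<dots> = A ^\<^sub>m m * X ^\<^sub>m m * (A * (X * X))" using x2 by simp
  also have "\<dots> = A ^\<^sub>m m * (X ^\<^sub>m m * A) * (X * X)" using A X by (simp add: assoc_mult_mat[of _ n n _ n _ n])
  also have "X ^\<^sub>m m * A = A * X ^\<^sub>m m" using pow_mat_commute[OF X A c[symmetric], of m] by simp
  also have "A ^\<^sub>m m * (A * X ^\<^sub>m m) * (X * X) = (A ^\<^sub>m m * A) * (X ^\<^sub>m m * X * X)"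
    using A X by (simp add: assoc_mult_mat[of _ n n _ n _ n])
  also have "\<dots> = A ^\<^sub>m Suc m * X ^\<^sub>m Suc (Suc m)" by simp
  finally show ?case .
qed

lemma drazin_projection:
  fixes A X :: "'a::comm_ring_1 mat"
  assumes A: "A \<in> carrier_mat n n" and X: "X \<in> carrier_mat n n"
    and X1: "A ^\<^sub>m (k+1) * X = A ^\<^sub>m k" and X2: "X * A * X = X" and X3: "A * X = X * A"
  shows "A * X = A ^\<^sub>m (k+1) * X ^\<^sub>m (k+1)" and "A * X = X ^\<^sub>m (k+1) * A ^\<^sub>m (k+1)"
    and "A ^\<^sub>m (k+1) * (A * X) = A ^\<^sub>m (k+1)" and "A * X * A ^\<^sub>m (k+1) = A ^\<^sub>m (k+1)"
proof -
  note as = assoc_mult_mat[of _ n n _ n _ n]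
  have "A * X = A * (A ^\<^sub>m k * X ^\<^sub>m (k+1))" using drazin_eq_pow_mult_pow[OF A X X3 X2, of k] by simp
  also have "\<dots> = A ^\<^sub>m (k+1) * X ^\<^sub>m (k+1)" using A X pow_mat_Suc_left[OF A, of k] by (simp add: as)
  finally show pow: "A * X = A ^\<^sub>m (k+1) * X ^\<^sub>m (k+1)" .
  show "A * X = X ^\<^sub>m (k+1) * A ^\<^sub>m (k+1)"
    using pow pow_mat_commute_pow[OF A X X3, of "k+1" "k+1"] by (rule trans)
  have AA: "A ^\<^sub>m (k+1) * A = A * A ^\<^sub>m (k+1)" by (rule pow_mat_commute[OF A A refl])
  have "A ^\<^sub>m (k+1) * (A * X) = (A ^\<^sub>m (k+1) * A) * X" using A X by (simp add: as)
  also have "\<dots> = A * (A ^\<^sub>m (k+1) * X)" unfolding AA using A X by (simp add: as)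
  also have "\<dots> = A ^\<^sub>m (k+1)" using X1 pow_mat_Suc_left[OF A, of k] by simp
  finally show AE: "A ^\<^sub>m (k+1) * (A * X) = A ^\<^sub>m (k+1)" .
  have AX: "A * X \<in> carrier_mat n n" using A X by simp
  have "A * (A * X) = A * (X * A)" unfolding X3 ..
  also have "\<dots> = A * X * A" using A X by (simp add: as)
  finally show "A * X * A ^\<^sub>m (k+1) = A ^\<^sub>m (k+1)" using pow_mat_commute[OF A AX, of "k+1"] AE by simp
qed

lemma drazin_unique:
  fixes A X Y :: "'a::comm_ring_1 mat"
  assumes A: "A \<in> carrier_mat n n" and X: "X \<in> carrier_mat n n" and Y: "Y \<in> carrier_mat n n"
    and X1: "A ^\<^sub>m (k+1) * X = A ^\<^sub>m k" and X2: "X * A * X = X" and X3: "A * X = X * A"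
    and Y1: "A ^\<^sub>m (k+1) * Y = A ^\<^sub>m k" and Y2: "Y * A * Y = Y" and Y3: "A * Y = Y * A"
  shows "X = Y"
proof -
  note as = assoc_mult_mat[of _ n n _ n _ n]
  note PX = drazin_projection[OF A X X1 X2 X3] and PY = drazin_projection[OF A Y Y1 Y2 Y3]
  \<comment> \<open>A X and A Y both act as the identity on A^(k+1), so A Y A X equals each of them.\<close>
  have "A * Y * (A * X) = A * Y * A ^\<^sub>m (k+1) * X ^\<^sub>m (k+1)" unfolding PX(1) using A X Y by (simp add: as)
  hence "A * Y * (A * X) = A * X" unfolding PY(4) PX(1)[symmetric] .
  moreover have "A * Y * (A * X) = Y ^\<^sub>m (k+1) * (A ^\<^sub>m (k+1) * (A * X))"
    unfolding PY(2) using A X Y by (simp add: as)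
  hence "A * Y * (A * X) = A * Y" unfolding PX(3) PY(2)[symmetric] .
  ultimately have AXY: "A * X = A * Y" by simp
  have "X = X * (A * X)" using X2 A X by (simp add: as)
  also have "\<dots> = X * (A * Y)" unfolding AXY ..
  also have "\<dots> = A * X * Y" unfolding X3 using A X Y by (simp add: as)
  also have "\<dots> = Y * A * Y" unfolding AXY Y3 ..
  also have "\<dots> = Y" by (rule Y2)
  finally show ?thesis .
qed

lemma drazin_eqI:
  fixes A X :: "'a::field mat"
  assumes A: "A \<in> carrier_mat n n" and X: "X \<in> carrier_mat n n"
    and X1: "A ^\<^sub>m (matrix_index A + 1) * X = A ^\<^sub>m matrix_index A"
    and X2: "X * A * X = X" and X3: "A * X = X * A"
  shows "drazin A = X"
  unfolding drazin_def
proof (rule the_equality)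
  show "X \<in> carrier_mat (dim_row A) (dim_row A) \<and> A ^\<^sub>m (matrix_index A + 1) * X = A ^\<^sub>m matrix_index A
      \<and> X * A * X = X \<and> A * X = X * A"
    using assms by auto
  fix Y assume "Y \<in> carrier_mat (dim_row A) (dim_row A) \<and> A ^\<^sub>m (matrix_index A + 1) * Y = A ^\<^sub>m matrix_index A
      \<and> Y * A * Y = Y \<and> A * Y = Y * A"
  thus "Y = X" using drazin_unique[OF A _ X] X1 X2 X3 A by auto
qed

section \<open>Splitting the block-diagonal similarity\<close>

definition rect_one_mat :: "nat \<Rightarrow> nat \<Rightarrow> 'a::{zero,one} mat" where
  "rect_one_mat nr nc = mat nr nc (\<lambda>(i,j). if i = j then 1 else 0)"

lemma rect_one_mat_carrier[simp]: "rect_one_mat nr nc \<in> carrier_mat nr nc"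
  unfolding rect_one_mat_def by simp

lemma rect_one_mat_mult:
  fixes Y :: "'a::comm_ring_1 mat"
  assumes Y: "Y \<in> carrier_mat a b"
  shows "rect_one_mat m a * Y = mat m b (\<lambda>(i,j). if i < a then Y $$ (i,j) else 0)"
proof (rule eq_matI)
  fix i j assume "i < dim_row (mat m b (\<lambda>(i,j). if i < a then Y $$ (i,j) else 0))"
    and "j < dim_col (mat m b (\<lambda>(i,j). if i < a then Y $$ (i,j) else 0))"
  hence i: "i < m" and j: "j < b" by auto
  have "(rect_one_mat m a * Y) $$ (i,j) = (\<Sum>l\<in>{0..<a}. (if i = l then 1 else 0) * Y $$ (l,j))"
    using i j Y by (simp add: rect_one_mat_def scalar_prod_def)
  also have "\<dots> = (\<Sum>l\<in>{0..<a}. if l = i then Y $$ (l,j) else 0)" by (rule sum.cong, auto)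
  also have "\<dots> = (if i < a then Y $$ (i,j) else 0)" by (simp add: sum.delta)
  finally show "(rect_one_mat m a * Y) $$ (i,j) = mat m b (\<lambda>(i,j). if i < a then Y $$ (i,j) else 0) $$ (i,j)"
    using i j by simp
qed (insert Y, auto simp: rect_one_mat_def)

lemma mult_rect_one_mat:
  fixes Y :: "'a::comm_ring_1 mat"
  assumes Y: "Y \<in> carrier_mat b a"
  shows "Y * rect_one_mat a m = mat b m (\<lambda>(i,j). if j < a then Y $$ (i,j) else 0)"
proof (rule eq_matI)
  fix i j assume "i < dim_row (mat b m (\<lambda>(i,j). if j < a then Y $$ (i,j) else 0))"
    and "j < dim_col (mat b m (\<lambda>(i,j). if j < a then Y $$ (i,j) else 0))"
  hence i: "i < b" and j: "j < m" by auto
  have "(Y * rect_one_mat a m) $$ (i,j) = (\<Sum>l\<in>{0..<a}. Y $$ (i,l) * (if l = j then 1 else 0))"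
    using i j Y by (simp add: rect_one_mat_def scalar_prod_def)
  also have "\<dots> = (\<Sum>l\<in>{0..<a}. if l = j then Y $$ (i,l) else 0)" by (rule sum.cong, auto)
  also have "\<dots> = (if j < a then Y $$ (i,j) else 0)" by (simp add: sum.delta)
  finally show "(Y * rect_one_mat a m) $$ (i,j) = mat b m (\<lambda>(i,j). if j < a then Y $$ (i,j) else 0) $$ (i,j)"
    using i j by simp
qed (insert Y, auto simp: rect_one_mat_def)

lemma rect_one_mat_mult_mult_rect_one_mat:
  fixes Y :: "'a::comm_ring_1 mat"
  assumes Y: "Y \<in> carrier_mat a a"
  shows "rect_one_mat (a+c) a * Y * rect_one_mat a (a+c) = four_block_mat Y (0\<^sub>m a c) (0\<^sub>m c a) (0\<^sub>m c c)"
proof -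
  define M where "M = mat (a+c) a (\<lambda>(i,j). if i < a then Y $$ (i,j) else 0)"
  have M: "M \<in> carrier_mat (a+c) a" unfolding M_def by simp
  have "rect_one_mat (a+c) a * Y * rect_one_mat a (a+c) = M * rect_one_mat a (a+c)"
    unfolding M_def rect_one_mat_mult[OF Y] ..
  also have "\<dots> = mat (a+c) (a+c) (\<lambda>(i,j). if j < a then M $$ (i,j) else 0)"
    by (rule mult_rect_one_mat[OF M])
  also have "\<dots> = four_block_mat Y (0\<^sub>m a c) (0\<^sub>m c a) (0\<^sub>m c c)"
    by (rule eq_matI, insert Y, auto simp: M_def)
  finally show ?thesis .
qed

lemma rect_one_mat_mult_rect_one_mat: "rect_one_mat a (a+c) * rect_one_mat (a+c) a = (1\<^sub>m a :: 'a::comm_ring_1 mat)"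
proof (rule eq_matI)
  fix i j assume "i < dim_row (1\<^sub>m a :: 'a mat)" and "j < dim_col (1\<^sub>m a :: 'a mat)"
  hence i: "i < a" and j: "j < a" by auto
  have "(rect_one_mat a (a+c) * rect_one_mat (a+c) a :: 'a mat) $$ (i,j)
      = (\<Sum>l\<in>{0..<a+c}. (if i = l then 1 else 0) * (if l = j then 1 else 0))"
    using i j by (simp add: rect_one_mat_def scalar_prod_def)
  also have "\<dots> = (\<Sum>l\<in>{0..<a+c}. if l = i then (if i = j then 1 else 0) else 0)" by (rule sum.cong, auto)
  also have "\<dots> = (if i = j then 1 else 0)" using i by (simp add: sum.delta)
  finally show "(rect_one_mat a (a+c) * rect_one_mat (a+c) a :: 'a mat) $$ (i,j) = (1\<^sub>m a :: 'a mat) $$ (i,j)"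
    using i j by simp
qed (auto simp: rect_one_mat_def)

lemma det_pow_mat:
  fixes B :: "'a::comm_ring_1 mat"
  assumes B: "B \<in> carrier_mat m m"
  shows "det (B ^\<^sub>m k) = det B ^ k"
proof (induct k)
  case 0 thus ?case by simp
next
  case (Suc k)
  have "det (B ^\<^sub>m Suc k) = det (B ^\<^sub>m k * B)" by simp
  also have "\<dots> = det (B ^\<^sub>m k) * det B" by (rule det_mult[OF pow_carrier_mat[OF B] B])
  finally show ?case using Suc by simp
qed

lemma block_diag_mult:
  fixes Y1 Y2 W1 W2 :: "'a::comm_ring_1 mat"
  assumes "Y1 \<in> carrier_mat a a" "Y2 \<in> carrier_mat a a" "W1 \<in> carrier_mat c c" "W2 \<in> carrier_mat c c"
  shows "four_block_mat Y1 (0\<^sub>m a c) (0\<^sub>m c a) W1 * four_block_mat Y2 (0\<^sub>m a c) (0\<^sub>m c a) W2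
       = four_block_mat (Y1 * Y2) (0\<^sub>m a c) (0\<^sub>m c a) (W1 * W2)"
  by (subst mult_four_block_mat, insert assms, auto)

lemma conj_mult_conj:
  fixes P Q M1 M2 :: "'a::comm_ring_1 mat"
  assumes P: "P \<in> carrier_mat m m" and Q: "Q \<in> carrier_mat m m" and QP: "Q * P = 1\<^sub>m m"
    and M1: "M1 \<in> carrier_mat m m" and M2: "M2 \<in> carrier_mat m m"
  shows "(P * M1 * Q) * (P * M2 * Q) = P * (M1 * M2) * Q"
proof -
  note as = assoc_mult_mat[of _ m m _ m _ m]
  have "(P * M1 * Q) * (P * M2 * Q) = P * (M1 * ((Q * P) * (M2 * Q)))" using P Q M1 M2 by (simp add: as)
  also have "\<dots> = P * (M1 * (M2 * Q))" unfolding QP using M2 Q by simp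
  also have "\<dots> = P * (M1 * M2) * Q" using P Q M1 M2 by (simp add: as)
  finally show ?thesis .
qed

lemma conj_block_diag_zero_factor:
  fixes P Q Y :: "'a::comm_ring_1 mat"
  assumes P: "P \<in> carrier_mat (r+c) (r+c)" and Q: "Q \<in> carrier_mat (r+c) (r+c)" and Y: "Y \<in> carrier_mat r r"
  shows "P * four_block_mat Y (0\<^sub>m r c) (0\<^sub>m c r) (0\<^sub>m c c) * Q
    = (P * rect_one_mat (r+c) r) * Y * (rect_one_mat r (r+c) * Q)"
proof -
  have E1Y: "rect_one_mat (r+c) r * Y \<in> carrier_mat (r+c) r" by (rule mult_carrier_mat[OF _ Y]) simp
  have E2Q: "rect_one_mat r (r+c) * Q \<in> carrier_mat r (r+c)" by (rule mult_carrier_mat[OF _ Q]) simp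
  have "(P * rect_one_mat (r+c) r) * Y * (rect_one_mat r (r+c) * Q)
      = P * (rect_one_mat (r+c) r * Y) * (rect_one_mat r (r+c) * Q)"
    using assoc_mult_mat[OF P rect_one_mat_carrier Y] by simp
  also have "\<dots> = P * ((rect_one_mat (r+c) r * Y) * (rect_one_mat r (r+c) * Q))"
    using assoc_mult_mat[OF P E1Y E2Q] by simp
  also have "\<dots> = P * (rect_one_mat (r+c) r * Y * rect_one_mat r (r+c) * Q)"
    using assoc_mult_mat[OF E1Y rect_one_mat_carrier Q] by simp
  also have "\<dots> = P * (rect_one_mat (r+c) r * Y * rect_one_mat r (r+c)) * Q"
    using assoc_mult_mat[OF P _ Q, of "rect_one_mat (r+c) r * Y * rect_one_mat r (r+c)"] E1Y by simp
  finally show ?thesis unfolding rect_one_mat_mult_mult_rect_one_mat[OF Y] ..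
qed

lemma rect_one_mat_conj_inverse:
  fixes P Q :: "'a::comm_ring_1 mat"
  assumes P: "P \<in> carrier_mat (r+c) (r+c)" and Q: "Q \<in> carrier_mat (r+c) (r+c)" and QP: "Q * P = 1\<^sub>m (r+c)"
  shows "(rect_one_mat r (r+c) * Q) * (P * rect_one_mat (r+c) r) = 1\<^sub>m r"
proof -
  have E2Q: "rect_one_mat r (r+c) * Q \<in> carrier_mat r (r+c)" by (rule mult_carrier_mat[OF _ Q]) simp
  have "(rect_one_mat r (r+c) * Q) * (P * rect_one_mat (r+c) r)
      = ((rect_one_mat r (r+c) * Q) * P) * rect_one_mat (r+c) r"
    using assoc_mult_mat[OF E2Q P rect_one_mat_carrier] by simp
  also have "(rect_one_mat r (r+c) * Q) * P = rect_one_mat r (r+c)"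
    using assoc_mult_mat[OF rect_one_mat_carrier Q P] QP right_mult_one_mat[OF rect_one_mat_carrier] by simp
  finally show ?thesis using rect_one_mat_mult_rect_one_mat by simp
qed

lemma drazin_block_diag_similar:
  fixes A :: "'a::field mat"
  assumes wit: "similar_mat_wit A (four_block_mat B (0\<^sub>m r c) (0\<^sub>m c r) N) P Q"
    and B: "B \<in> carrier_mat r r" and N: "N \<in> carrier_mat c c" and Nk: "N ^\<^sub>m k = 0\<^sub>m c c"
    and Bi: "Bi \<in> carrier_mat r r" and BiB: "Bi * B = 1\<^sub>m r" and BBi: "B * Bi = 1\<^sub>m r"
  defines "X \<equiv> P * four_block_mat Bi (0\<^sub>m r c) (0\<^sub>m c r) (0\<^sub>m c c) * Q"
  shows "A ^\<^sub>m (k+1) * X = A ^\<^sub>m k" and "X * A * X = X" and "A * X = X * A"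
    and "X * A = P * four_block_mat (1\<^sub>m r) (0\<^sub>m r c) (0\<^sub>m c r) (0\<^sub>m c c) * Q"
proof -
  define D where "D = four_block_mat B (0\<^sub>m r c) (0\<^sub>m c r) N"
  define Z where "Z = (0\<^sub>m c c :: 'a mat)"
  define D' where "D' = four_block_mat Bi (0\<^sub>m r c) (0\<^sub>m c r) Z"
  have D: "D \<in> carrier_mat (r+c) (r+c)" and D': "D' \<in> carrier_mat (r+c) (r+c)" and Z: "Z \<in> carrier_mat c c"
    unfolding D_def D'_def Z_def using B N Bi by auto
  have n: "r + c = dim_row A" using similar_mat_witD(5)[OF refl wit[folded D_def]] D by (metis carrier_matD(1))
  note w = similar_mat_witD[OF n wit[folded D_def]]
  note cm = conj_mult_conj[OF w(6,7,2)]
  have X: "X = P * D' * Q" unfolding X_def D'_def Z_def ..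
  have Apow: "A ^\<^sub>m j = P * four_block_mat (B ^\<^sub>m j) (0\<^sub>m r c) (0\<^sub>m c r) (N ^\<^sub>m j) * Q" for j
    using similar_mat_wit_pow_id[OF wit] pow_four_block_mat[OF B N] by simp
  have Nk1: "N ^\<^sub>m (k+1) = Z" unfolding Z_def using Nk N by simp
  have "A ^\<^sub>m (k+1) * X = P * (four_block_mat (B ^\<^sub>m (k+1)) (0\<^sub>m r c) (0\<^sub>m c r) Z * D') * Q"
    unfolding Apow X Nk1 by (rule cm[OF _ D'], insert B Z, auto)
  also have "\<dots> = P * four_block_mat (B ^\<^sub>m (k+1) * Bi) (0\<^sub>m r c) (0\<^sub>m c r) (Z * Z) * Q"
    unfolding D'_def using B Bi Z by (subst block_diag_mult) auto
  also have "B ^\<^sub>m (k+1) * Bi = B ^\<^sub>m k"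
    using B Bi BBi by (simp add: assoc_mult_mat[of _ r r _ r _ r])
  finally show "A ^\<^sub>m (k+1) * X = A ^\<^sub>m k" unfolding Apow Nk Z_def by simp
  have "X * A = P * (D' * D) * Q" unfolding X using w(3) cm[OF D' D] by simp
  also have "D' * D = four_block_mat (1\<^sub>m r) (0\<^sub>m r c) (0\<^sub>m c r) Z"
    unfolding D'_def D_def using block_diag_mult[OF Bi B Z N] BiB N by (simp add: Z_def)
  finally show XA: "X * A = P * four_block_mat (1\<^sub>m r) (0\<^sub>m r c) (0\<^sub>m c r) (0\<^sub>m c c) * Q"
    unfolding Z_def .
  have "A * X = P * (D * D') * Q" unfolding X using w(3) cm[OF D D'] by simp
  also have "D * D' = four_block_mat (1\<^sub>m r) (0\<^sub>m r c) (0\<^sub>m c r) Z"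
    unfolding D'_def D_def using block_diag_mult[OF B Bi N Z] BBi N by (simp add: Z_def)
  finally show "A * X = X * A" unfolding XA Z_def .
  have I: "four_block_mat (1\<^sub>m r) (0\<^sub>m r c) (0\<^sub>m c r) Z \<in> carrier_mat (r+c) (r+c)" using Z by auto
  have "X * A * X = P * (four_block_mat (1\<^sub>m r) (0\<^sub>m r c) (0\<^sub>m c r) Z * D') * Q"
    unfolding XA unfolding X Z_def[symmetric] by (rule cm[OF I D'])
  also have "four_block_mat (1\<^sub>m r) (0\<^sub>m r c) (0\<^sub>m c r) Z * D' = D'"
    unfolding D'_def using block_diag_mult[OF one_carrier_mat Bi Z Z] Bi by (simp add: Z_def)
  finally show "X * A * X = X" unfolding X .
qed

lemma drazin_mult_factorization:
  fixes A :: "complex mat"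
  assumes A: "A \<in> carrier_mat n n" and k: "matrix_index A = k"
    and r1: "mrank (A ^\<^sub>m (k+1)) = r" and r0: "mrank (A ^\<^sub>m k) = r"
  obtains F H C where "F \<in> carrier_mat n r" "H \<in> carrier_mat r n" "C \<in> carrier_mat r r"
    "H * F = 1\<^sub>m r" "det C \<noteq> 0" "A ^\<^sub>m (k+1) = F * C * H" "drazin A * A = F * H"
proof -
  obtain B N P Q c where B: "B \<in> carrier_mat r r" and N: "N \<in> carrier_mat c c" and dB: "det B \<noteq> 0"
    and Nk: "N ^\<^sub>m k = 0\<^sub>m c c" and wit: "similar_mat_wit A (four_block_mat B (0\<^sub>m r c) (0\<^sub>m c r) N) P Q"
    by (rule core_nilpotent_decomposition[OF A r1 r0])
  from det_non_zero_imp_unit[OF B dB, of "()"] obtain Bi where Bi: "Bi \<in> carrier_mat r r"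
    and BiB: "Bi * B = 1\<^sub>m r" and BBi: "B * Bi = 1\<^sub>m r"
    unfolding Units_def ring_mat_def by auto
  have n: "n = r + c"
    using similar_mat_witD2(5)[OF A wit] four_block_carrier_mat[OF B N] by (metis carrier_matD(1))
  note w = similar_mat_witD2[OF A wit, unfolded n]
  note X = drazin_block_diag_similar[OF wit B N Nk Bi BiB BBi]
  define F where "F = P * rect_one_mat (r+c) r"
  define H where "H = rect_one_mat r (r+c) * Q"
  have F: "F \<in> carrier_mat n r" unfolding F_def n by (rule mult_carrier_mat[OF w(6)]) simp
  have H: "H \<in> carrier_mat r n" unfolding H_def n by (rule mult_carrier_mat[OF _ w(7)]) simp
  have "drazin A = P * four_block_mat Bi (0\<^sub>m r c) (0\<^sub>m c r) (0\<^sub>m c c) * Q"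
    by (rule drazin_eqI[OF A], insert X k w Bi n, auto)
  hence "drazin A * A = P * four_block_mat (1\<^sub>m r) (0\<^sub>m r c) (0\<^sub>m c r) (0\<^sub>m c c) * Q"
    using X(4) by simp
  also have "\<dots> = F * 1\<^sub>m r * H"
    unfolding F_def H_def by (rule conj_block_diag_zero_factor[OF w(6,7) one_carrier_mat])
  finally have "drazin A * A = F * H" using F by simp
  moreover have "A ^\<^sub>m (k+1) = F * B ^\<^sub>m (k+1) * H"
  proof -
    have "N ^\<^sub>m (k+1) = 0\<^sub>m c c" using Nk N by simp
    hence "A ^\<^sub>m (k+1) = P * four_block_mat (B ^\<^sub>m (k+1)) (0\<^sub>m r c) (0\<^sub>m c r) (0\<^sub>m c c) * Q"
      unfolding similar_mat_wit_pow_id[OF wit] pow_four_block_mat[OF B N] by simp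
    thus ?thesis unfolding F_def H_def conj_block_diag_zero_factor[OF w(6,7) pow_carrier_mat[OF B]] .
  qed
  moreover have "H * F = 1\<^sub>m r" unfolding H_def F_def by (rule rect_one_mat_conj_inverse[OF w(6,7,2)])
  moreover have "det (B ^\<^sub>m (k+1)) \<noteq> 0" unfolding det_pow_mat[OF B] using dB by simp
  ultimately show ?thesis using that[OF F H pow_carrier_mat[OF B]] by blast
qed

theorem corollary2p6:
  fixes A :: "complex mat" and n k r :: nat
  assumes "A \<in> carrier_mat n n"
    and "matrix_index A = k"
    and "mrank (A ^\<^sub>m (k+1)) = r" and "mrank (A ^\<^sub>m k) = r" and "r \<le> n"
  shows "\<forall>i<n. \<forall>j<n. (drazin A * A) $$ (i,j) =
    (\<Sum>\<beta>\<in>{\<beta>\<in>Jrn r n. i \<in> \<beta>}.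
        det (submatrix (mat_col_replace (A ^\<^sub>m (k+1)) i (col (A ^\<^sub>m (k+1)) j)) \<beta> \<beta>))
    / (\<Sum>\<beta>\<in>Jrn r n. det (submatrix (A ^\<^sub>m (k+1)) \<beta> \<beta>))"
proof (intro allI impI)
  fix i j assume i: "i < n" and j: "j < n"
  obtain F H C where F: "F \<in> carrier_mat n r" and H: "H \<in> carrier_mat r n" and C: "C \<in> carrier_mat r r"
    and HF: "H * F = 1\<^sub>m r" and dC: "det C \<noteq> 0" and FCH: "A ^\<^sub>m (k+1) = F * C * H"
    and DA: "drazin A * A = F * H"
    using drazin_mult_factorization[OF assms(1-4)] by blast
  show "(drazin A * A) $$ (i,j) =
    (\<Sum>\<beta>\<in>{\<beta>\<in>Jrn r n. i \<in> \<beta>}.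
        det (submatrix (mat_col_replace (A ^\<^sub>m (k+1)) i (col (A ^\<^sub>m (k+1)) j)) \<beta> \<beta>))
    / (\<Sum>\<beta>\<in>Jrn r n. det (submatrix (A ^\<^sub>m (k+1)) \<beta> \<beta>))"
    unfolding FCH DA sum_col_replace_minors_factorization[OF F H C HF i j]
      sum_principal_minors_factorization[OF F H C HF]
    using dC by simp
qed

end
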